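(* Let $\tau$ and $\bar\tau$ be i.i.d. nonnegative random variables with $0<\mathbb{E}[\tau^2]<\infty$. For a threshold $\gamma\ge0$ define $$\mathbb{E}[L](\gamma)=\mathbb{E}\big[[\gamma-\bar\tau]^+\big]+\mathbb{E}[\tau],$$ $$\mathbb{E}[Q](\gamma)=\mathbb{E}\big[\bar\tau\,[\gamma-\bar\tau]^+\big]+(\mathbb{E}[\tau])^2+\tfrac12\,\mathbb{E}\Big[\big([\gamma-\bar\tau]^++\tau\big)^2\Big],$$ where $[x]^+=\max(x,0)$. For $\eta\ge0$ let $$q(\eta)=\min_{\gamma\ge0}\big(\mathbb{E}[Q](\gamma)-\eta\,\mathbb{E}[L](\gamma)\big).$$ Then: 1. At every $\gamma$ at which $\mathbb{P}(\tau\le\gamma)$ is continuous, $\frac{d\mathbb{E}[Q]}{d\gamma}=(\gamma+\mathbb{E}[\tau])\,\mathbb{P}(\tau\le\gamma)$ and $\frac{d\mathbb{E}[L]}{d\gamma}=\mathbb{P}(\tau\le\gamma)$. 2. For every $\gamma\ge0$, $\mathbb{E}[Q](\gamma)-\mathbb{E}[\tau]\,\mathbb{E}[L](\gamma)=\mathbb{E}\big[\bar\tau[\gamma-\bar\tau]^+\big]+\tfrac12\mathbb{E}\big[([\gamma-\bar\tau]^+)^2\big]+\tfrac12\mathbb{E}[\tau^2]>0$; in particular $q(\mathbb{E}[\tau])>0$. 3. The equation $q(\eta)=0$ has a unique solution $\eta^*$, which satisfies $\eta^*>\mathbb{E}[\tau]$. The threshold $\gamma^*=\eta^*-\mathbb{E}[\tau]$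 is strictly positive and minimizes $\mathbb{E}[Q](\gamma)/\mathbb{E}[L](\gamma)$ over $\gamma\ge0$.
   Context: Interpretation: $\tau$ is the service time and $\bar\tau$ is the service time of the previous update. The waiting policy waits $[\gamma-\bar\tau]^+$ before sampling. $\mathbb{E}[Q]/\mathbb{E}[L]$ is the resulting long-term average age of information. *)

theory Defs
  imports "HOL-Probability.Probability"
begin

definition pplus :: "real \<Rightarrow> real" where
  "pplus x = max x 0"

definition EL :: "'a measure \<Rightarrow> ('a \<Rightarrow> real) \<Rightarrow> ('a \<Rightarrow> real) \<Rightarrow> real \<Rightarrow> real" where
  "EL M tau taub g = (\<integral>x. pplus (g - taub x) \<partial>M) + (\<integral>x. tau x \<partial>M)"

definition EQ :: "'a measure \<Rightarrow> ('a \<Rightarrow> real) \<Rightarrow> ('a \<Rightarrow> real) \<Rightarrow> real \<Rightarrow> real" where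
  "EQ M tau taub g = (\<integral>x. taub x * pplus (g - taub x) \<partial>M) + (\<integral>x. tau x \<partial>M)^2
      + (1/2) * (\<integral>x. (pplus (g - taub x) + tau x)^2 \<partial>M)"

definition qfun :: "'a measure \<Rightarrow> ('a \<Rightarrow> real) \<Rightarrow> ('a \<Rightarrow> real) \<Rightarrow> real \<Rightarrow> real" where
  "qfun M tau taub eta = (INF g\<in>{0..}. EQ M tau taub g - eta * EL M tau taub g)"

end

theory Submission
  imports Defs
begin

text \<open>
  Write \<open>\<tau>'\<close> for \<open>taub\<close>, \<open>w = [\<gamma> - \<tau>']\<^sup>+\<close> and \<open>\<eta> = E[\<tau>] + c\<close>. Independence turns
  \<open>E[Q](\<gamma>) - \<eta> E[L](\<gamma>)\<close> into \<open>E[\<tau>' w + w\<^sup>2/2 - c w] + E[\<tau>\<^sup>2]/2 - c E[\<tau>]\<close>, and pointwise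
  \<open>\<tau>' w + w\<^sup>2/2 - c w \<ge> -([c - \<tau>']\<^sup>+)\<^sup>2/2\<close>, with equality at \<open>\<gamma> = c\<close>. Hence
  \<open>q(E[\<tau>] + c) \<ge> E[\<tau>\<^sup>2]/2 - c E[\<tau>] - E[([c - \<tau>']\<^sup>+)\<^sup>2]/2\<close>, with equality (attained at
  \<open>\<gamma> = c\<close>) when \<open>c \<ge> 0\<close>. The right-hand side is continuous and strictly decreasing in \<open>c\<close>
  and equals \<open>E[\<tau>\<^sup>2]/2 > 0\<close> at \<open>c = 0\<close>, so \<open>q\<close> has exactly one root \<open>\<eta>\<^sup>*\<close>, it lies above
  \<open>E[\<tau>]\<close>, and \<open>E[Q] - \<eta>\<^sup>* E[L] \<ge> 0\<close> with equality at \<open>\<gamma>\<^sup>* = \<eta>\<^sup>* - E[\<tau>]\<close> says that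
  \<open>\<gamma>\<^sup>*\<close> minimises the ratio.

  For the derivatives one differentiates under the integral sign: the integrands are smooth in
  \<open>\<gamma>\<close> except at the kink \<open>\<gamma> = \<tau>'\<close>, whose contribution to the difference quotient is bounded
  by \<open>P(\<gamma> - |h| < \<tau>' \<le> \<gamma> + |h|)\<close>; this vanishes as \<open>h \<rightarrow> 0\<close> at continuity points of the
  distribution function.
\<close>

lemma pplus_nonneg: "0 \<le> pplus x"
  by (simp add: pplus_def)

lemma borel_measurable_pplus [measurable]: "pplus \<in> borel_measurable borel"
  unfolding pplus_def by measurable

lemma pplus_kink_bound:
  fixes g h t :: real
  shows "\<bar>pplus (g + h - t) - pplus (g - t) - h * indicator {..g} t\<bar>
           \<le> \<bar>h\<bar> * indicator {g - \<bar>h\<bar><..g + \<bar>h\<bar>} t"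
  by (auto simp: pplus_def indicator_def max_def abs_if)

lemma pplus_square_remainder:
  fixes u h :: real
  shows "\<bar>(pplus (u + h))\<^sup>2 / 2 - (pplus u)\<^sup>2 / 2 - h * pplus u\<bar> \<le> h\<^sup>2 / 2"
proof (cases "0 \<le> u"; cases "0 \<le> u + h")
  assume "0 \<le> u" "0 \<le> u + h"
  then show ?thesis by (simp add: pplus_def power2_eq_square algebra_simps)
next
  assume "0 \<le> u" "\<not> 0 \<le> u + h"
  then have "0 \<le> u * (- h - u / 2)"
    by (intro mult_nonneg_nonneg) auto
  moreover have "u * (- h - u / 2) \<le> h\<^sup>2 / 2"
    using zero_le_power2[of "u + h"] by (simp add: power2_eq_square algebra_simps)
  ultimately show ?thesis using \<open>0 \<le> u\<close> \<open>\<not> 0 \<le> u + h\<close>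
    by (simp add: pplus_def power2_eq_square algebra_simps)
next
  assume "\<not> 0 \<le> u" "0 \<le> u + h"
  then have "(u + h)\<^sup>2 \<le> h\<^sup>2"
    by (intro power_mono) auto
  with \<open>\<not> 0 \<le> u\<close> \<open>0 \<le> u + h\<close> show ?thesis
    by (simp add: pplus_def)
next
  assume "\<not> 0 \<le> u" "\<not> 0 \<le> u + h"
  then show ?thesis by (simp add: pplus_def)
qed

text \<open>The area under the age curve while waiting \<open>[y - t]\<^sup>+\<close> after a service time \<open>t\<close>.\<close>

definition wait_area :: "real \<Rightarrow> real \<Rightarrow> real" where
  "wait_area y t = t * pplus (y - t) + (pplus (y - t))\<^sup>2 / 2"

lemma borel_measurable_wait_area [measurable]: "wait_area y \<in> borel_measurable borel"
  unfolding wait_area_def by measurable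

lemma wait_area_kink_bound:
  fixes g h t :: real
  shows "\<bar>wait_area (g + h) t - wait_area g t - h * (g * indicator {..g} t)\<bar>
           \<le> (\<bar>g\<bar> + 2) * \<bar>h\<bar> * (\<bar>h\<bar> + indicator {g - \<bar>h\<bar><..g + \<bar>h\<bar>} t)"
proof -
  let ?W = "{g - \<bar>h\<bar><..g + \<bar>h\<bar>}"
  define kink where "kink = pplus (g + h - t) - pplus (g - t) - h * indicator {..g} t"
  define smooth where "smooth = (pplus (g + h - t))\<^sup>2 / 2 - (pplus (g - t))\<^sup>2 / 2 - h * pplus (g - t)"
  have split: "wait_area (g + h) t - wait_area g t - h * (g * indicator {..g} t) = t * kink + smooth"
    by (auto simp: wait_area_def kink_def smooth_def pplus_def indicator_def algebra_simps)
  have kink: "\<bar>kink\<bar> \<le> \<bar>h\<bar> * indicator ?W t"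
    unfolding kink_def by (rule pplus_kink_bound)
  have smooth: "\<bar>smooth\<bar> \<le> h\<^sup>2 / 2"
    using pplus_square_remainder[of "g - t" h] by (simp add: smooth_def algebra_simps)
  have quadratic: "(b + a) * a + a\<^sup>2 / 2 \<le> (b + 2) * a * (a + 1)" "a\<^sup>2 / 2 \<le> (b + 2) * a * a"
    if "0 \<le> a" "0 \<le> b" for a b :: real
  proof -
    have "0 \<le> b * (a * a)" "0 \<le> a * a"
      using that by simp_all
    with that show "(b + a) * a + a\<^sup>2 / 2 \<le> (b + 2) * a * (a + 1)" "a\<^sup>2 / 2 \<le> (b + 2) * a * a"
      by (simp_all add: power2_eq_square algebra_simps)
  qed
  show ?thesis
  proof (cases "t \<in> ?W")
    case True
    then have "\<bar>t\<bar> \<le> \<bar>g\<bar> + \<bar>h\<bar>" by auto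
    with kink True have "\<bar>t * kink\<bar> \<le> (\<bar>g\<bar> + \<bar>h\<bar>) * \<bar>h\<bar>"
      unfolding abs_mult by (intro mult_mono) auto
    moreover have "(\<bar>g\<bar> + \<bar>h\<bar>) * \<bar>h\<bar> + \<bar>h\<bar>\<^sup>2 / 2 \<le> (\<bar>g\<bar> + 2) * \<bar>h\<bar> * (\<bar>h\<bar> + 1)"
      using quadratic(1)[of "\<bar>h\<bar>" "\<bar>g\<bar>"] by simp
    ultimately show ?thesis
      using True smooth abs_triangle_ineq[of "t * kink" smooth] by (simp add: split)
  next
    case False
    with kink have "kink = 0" by simp
    moreover have "\<bar>h\<bar>\<^sup>2 / 2 \<le> (\<bar>g\<bar> + 2) * \<bar>h\<bar> * \<bar>h\<bar>"
      using quadratic(2)[of "\<bar>h\<bar>" "\<bar>g\<bar>"] by simp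
    ultimately show ?thesis
      using False smooth by (simp add: split)
  qed
qed

text \<open>The threshold \<open>c\<close> minimises the objective with multiplier \<open>E[\<tau>] + c\<close> pointwise,
  whatever the service time \<open>t\<close>.\<close>

lemma wait_area_minus_linear_ge:
  fixes g c t :: real
  shows "wait_area g t - c * pplus (g - t) \<ge> -((pplus (c - t))\<^sup>2 / 2)"
proof (cases "t \<le> g")
  case True
  show ?thesis
  proof (cases "t \<le> c")
    case True
    have "wait_area g t - c * pplus (g - t) + (pplus (c - t))\<^sup>2 / 2 = (g - c)\<^sup>2 / 2"
      using \<open>t \<le> g\<close> True by (simp add: wait_area_def pplus_def power2_eq_square field_simps)
    moreover have "0 \<le> (g - c)\<^sup>2 / 2" by simp
    ultimately show ?thesis by linarith
  next
    case False
    have "0 \<le> (g - t) * ((g - t) / 2 + (t - c))"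
      using \<open>t \<le> g\<close> False by (intro mult_nonneg_nonneg) auto
    then show ?thesis
      using \<open>t \<le> g\<close> False by (simp add: wait_area_def pplus_def power2_eq_square algebra_simps)
  qed
next
  case False
  then show ?thesis by (simp add: wait_area_def pplus_def)
qed

lemma wait_area_minus_linear_diag:
  fixes c t :: real
  shows "wait_area c t - c * pplus (c - t) = -((pplus (c - t))\<^sup>2 / 2)"
  by (simp add: wait_area_def pplus_def power2_eq_square algebra_simps max_def)

lemma has_real_derivative_by_remainder:
  fixes f G :: "real \<Rightarrow> real"
  assumes remainder: "\<And>y. \<bar>f y - f x - (y - x) * D\<bar> \<le> \<bar>y - x\<bar> * G y"
    and "(G \<longlongrightarrow> 0) (at x)"
  shows "(f has_real_derivative D) (at x)"
proof -
  have "\<bar>(f y - f x) / (y - x) - D\<bar> \<le> G y" if "y \<noteq> x" for y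
  proof -
    have "(f y - f x) / (y - x) - D = (f y - f x - (y - x) * D) / (y - x)"
      using that by (simp add: field_simps)
    with remainder[of y] that show ?thesis
      by (simp add: abs_divide divide_le_eq mult.commute)
  qed
  then have "\<forall>\<^sub>F y in at x. norm ((f y - f x) / (y - x) - D) \<le> G y"
    by (auto simp: eventually_at_filter)
  from Lim_null_comparison[OF this assms(2)] show ?thesis
    by (simp add: has_field_derivative_iff LIM_zero_iff)
qed

lemma integral_indicator_comp:
  "(\<integral>x. indicator A (X x) \<partial>M) = measure M {x\<in>space M. X x \<in> A}"
proof -
  have "(\<integral>x. indicator A (X x) \<partial>M) = (\<integral>x. indicator {x\<in>space M. X x \<in> A} x \<partial>M)"
    by (intro Bochner_Integration.integral_cong) (auto simp: indicator_def)
  also have "\<dots> = measure M ({x\<in>space M. X x \<in> A} \<inter> space M)"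
    by simp
  finally show ?thesis
    by (simp add: Int_absorb2 subset_eq)
qed

context prob_space
begin

lemma integrable_indicator_comp:
  assumes [measurable]: "X \<in> measurable M N" "A \<in> sets N"
  shows "integrable M (\<lambda>x. indicator A (X x) :: real)"
  by (rule integrable_const_bound[where B=1]) (auto simp: indicator_def)


lemma has_real_derivative_integral_kink:
  fixes X :: "'a \<Rightarrow> real" and f :: "real \<Rightarrow> real \<Rightarrow> real" and D :: "real \<Rightarrow> real"
  assumes [measurable]: "X \<in> borel_measurable M"
    and integrable_f: "\<And>y. integrable M (\<lambda>x. f y (X x))"
    and integrable_D: "integrable M (\<lambda>x. D (X x))"
    and bound: "\<And>h t. \<bar>f (g + h) t - f g t - h * D t\<bar>
                        \<le> C * \<bar>h\<bar> * (\<bar>h\<bar> + indicator {g - \<bar>h\<bar><..g + \<bar>h\<bar>} t)"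
    and cont: "isCont (\<lambda>s. measure M {x\<in>space M. X x \<le> s}) g"
  shows "((\<lambda>y. \<integral>x. f y (X x) \<partial>M) has_real_derivative (\<integral>x. D (X x) \<partial>M)) (at g)"
proof -
  define F where "F s = measure M {x\<in>space M. X x \<le> s}" for s
  define G where "G y = C * (\<bar>y - g\<bar> + (F (g + \<bar>y - g\<bar>) - F (g - \<bar>y - g\<bar>)))" for y
  have window: "(\<integral>x. indicator {g - \<bar>h\<bar><..g + \<bar>h\<bar>} (X x) \<partial>M) = F (g + \<bar>h\<bar>) - F (g - \<bar>h\<bar>)"
    for h
  proof -
    have "{x\<in>space M. X x \<in> {g - \<bar>h\<bar><..g + \<bar>h\<bar>}}
            = {x\<in>space M. X x \<le> g + \<bar>h\<bar>} - {x\<in>space M. X x \<le> g - \<bar>h\<bar>}"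
      by auto
    moreover have "{x\<in>space M. X x \<le> s} \<in> sets M" for s
      by measurable
    moreover have "{x\<in>space M. X x \<le> g - \<bar>h\<bar>} \<subseteq> {x\<in>space M. X x \<le> g + \<bar>h\<bar>}"
      by auto
    ultimately show ?thesis
      by (simp add: integral_indicator_comp F_def finite_measure_Diff)
  qed
  have integrable_window: "integrable M (\<lambda>x. indicator {g - \<bar>h\<bar><..g + \<bar>h\<bar>} (X x) :: real)" for h
    by (rule integrable_indicator_comp[where N=borel]) auto
  show ?thesis
  proof (rule has_real_derivative_by_remainder)
    fix y
    define h where "h = y - g"
    have "\<bar>(\<integral>x. f y (X x) \<partial>M) - (\<integral>x. f g (X x) \<partial>M) - (y - g) * (\<integral>x. D (X x) \<partial>M)\<bar>
          = \<bar>\<integral>x. f (g + h) (X x) - f g (X x) - h * D (X x) \<partial>M\<bar>"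
      using integrable_f[of y] integrable_f[of g] integrable_D by (simp add: h_def)
    also have "\<dots> \<le> (\<integral>x. C * \<bar>h\<bar> * (\<bar>h\<bar> + indicator {g - \<bar>h\<bar><..g + \<bar>h\<bar>} (X x)) \<partial>M)"
      using integrable_f[of "g + h"] integrable_f[of g] integrable_D integrable_window[of h]
      by (intro order_trans[OF integral_abs_bound] integral_mono bound) auto
    also have "\<dots> = \<bar>y - g\<bar> * G y"
      using integrable_window[of h] by (simp add: window G_def h_def prob_space algebra_simps)
    finally show "\<bar>(\<integral>x. f y (X x) \<partial>M) - (\<integral>x. f g (X x) \<partial>M) - (y - g) * (\<integral>x. D (X x) \<partial>M)\<bar>
                    \<le> \<bar>y - g\<bar> * G y" .
  next
    have "isCont F g"
      using cont unfolding F_def[abs_def] .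
    moreover have "((\<lambda>y. g + \<bar>y - g\<bar>) \<longlongrightarrow> g) (at g)" "((\<lambda>y. g - \<bar>y - g\<bar>) \<longlongrightarrow> g) (at g)"
      by (auto intro!: tendsto_eq_intros)
    ultimately have "((\<lambda>y. F (g + \<bar>y - g\<bar>)) \<longlongrightarrow> F g) (at g)" "((\<lambda>y. F (g - \<bar>y - g\<bar>)) \<longlongrightarrow> F g) (at g)"
      by (auto intro: isCont_tendsto_compose)
    then show "(G \<longlongrightarrow> 0) (at g)"
      unfolding G_def by (auto intro!: tendsto_eq_intros)
  qed
qed

end

locale iid_service_times = prob_space M for M :: "'a measure" +
  fixes tau taub :: "'a \<Rightarrow> real"
  assumes tau_measurable [measurable]: "tau \<in> borel_measurable M"
    and taub_measurable [measurable]: "taub \<in> borel_measurable M"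
    and indep: "indep_var borel tau borel taub"
    and same_distr: "distr M borel tau = distr M borel taub"
    and tau_nonneg: "AE x in M. tau x \<ge> 0" and taub_nonneg: "AE x in M. taub x \<ge> 0"
    and square_integrable_tau: "integrable M (\<lambda>x. (tau x)\<^sup>2)"
    and second_moment_pos: "(\<integral>x. (tau x)\<^sup>2 \<partial>M) > 0"
begin

abbreviation "mean \<equiv> \<integral>x. tau x \<partial>M"
abbreviation "mom2 \<equiv> \<integral>x. (tau x)\<^sup>2 \<partial>M"
abbreviation "Ewait g \<equiv> \<integral>x. pplus (g - taub x) \<partial>M"
abbreviation "Ewait_sq g \<equiv> \<integral>x. (pplus (g - taub x))\<^sup>2 \<partial>M"
abbreviation "Ewait_prod g \<equiv> \<integral>x. taub x * pplus (g - taub x) \<partial>M"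

lemma square_integrable_taub: "integrable M (\<lambda>x. (taub x)\<^sup>2)"
proof -
  have "integrable (distr M borel tau) (\<lambda>t. t\<^sup>2)"
    using square_integrable_tau by (subst integrable_distr_eq) auto
  then have "integrable (distr M borel taub) (\<lambda>t. t\<^sup>2)"
    by (simp add: same_distr)
  then show ?thesis by (subst (asm) integrable_distr_eq) auto
qed

lemma integrable_tau: "integrable M tau"
  using square_integrable_imp_integrable[OF tau_measurable square_integrable_tau] .

lemma integrable_taub: "integrable M taub"
  using square_integrable_imp_integrable[OF taub_measurable square_integrable_taub] .

lemma cdf_taub: "measure M {x\<in>space M. taub x \<le> s} = measure M {x\<in>space M. tau x \<le> s}"
proof -
  have "measure M {x\<in>space M. X x \<le> s} = measure (distr M borel X) {..s}"
    if [measurable]: "X \<in> borel_measurable M" for X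
    by (subst measure_distr) (auto simp: vimage_def Int_def conj_commute)
  then show ?thesis by (simp add: same_distr)
qed

lemma integrable_wait: "integrable M (\<lambda>x. pplus (g - taub x))"
  by (rule Bochner_Integration.integrable_bound[where f="\<lambda>x. \<bar>g\<bar> + \<bar>taub x\<bar>"])
    (use integrable_taub in \<open>auto simp: pplus_def\<close>)

lemma integrable_wait_prod: "integrable M (\<lambda>x. taub x * pplus (g - taub x))"
proof (rule Bochner_Integration.integrable_bound[where f="\<lambda>x. \<bar>g\<bar> * \<bar>taub x\<bar> + (taub x)\<^sup>2"])
  show "integrable M (\<lambda>x. \<bar>g\<bar> * \<bar>taub x\<bar> + (taub x)\<^sup>2)"
    using integrable_taub square_integrable_taub by auto
  have "\<bar>t * pplus (g - t)\<bar> \<le> \<bar>g\<bar> * \<bar>t\<bar> + t\<^sup>2" for t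
    unfolding pplus_def power2_eq_square abs_mult by (auto simp: max_def algebra_simps abs_if)
  then show "AE x in M. norm (taub x * pplus (g - taub x)) \<le> norm (\<bar>g\<bar> * \<bar>taub x\<bar> + (taub x)\<^sup>2)"
    by auto
qed auto

lemma integrable_wait_sq: "integrable M (\<lambda>x. (pplus (g - taub x))\<^sup>2)"
proof (rule Bochner_Integration.integrable_bound[where f="\<lambda>x. 2 * g\<^sup>2 + 2 * (taub x)\<^sup>2"])
  show "integrable M (\<lambda>x. 2 * g\<^sup>2 + 2 * (taub x)\<^sup>2)"
    using square_integrable_taub by auto
  have "(pplus (g - t))\<^sup>2 \<le> 2 * g\<^sup>2 + 2 * t\<^sup>2" for t
  proof -
    have "(pplus (g - t))\<^sup>2 \<le> (g - t)\<^sup>2"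
      by (auto simp: pplus_def max_def)
    also have "\<dots> \<le> 2 * g\<^sup>2 + 2 * t\<^sup>2"
      using zero_le_power2[of "g + t"] by (simp add: power2_eq_square algebra_simps)
    finally show ?thesis .
  qed
  then show "AE x in M. norm ((pplus (g - taub x))\<^sup>2) \<le> norm (2 * g\<^sup>2 + 2 * (taub x)\<^sup>2)"
    by auto
qed auto

lemma integral_wait_area: "(\<integral>x. wait_area g (taub x) \<partial>M) = Ewait_prod g + Ewait_sq g / 2"
  and integrable_wait_area: "integrable M (\<lambda>x. wait_area g (taub x))"
  using integrable_wait_prod[of g] integrable_wait_sq[of g] by (simp_all add: wait_area_def)

lemma integral_tau_wait: "(\<integral>x. tau x * pplus (g - taub x) \<partial>M) = mean * Ewait g"
  and integrable_tau_wait: "integrable M (\<lambda>x. tau x * pplus (g - taub x))"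
proof -
  have "indep_var borel (id \<circ> tau) borel ((\<lambda>t. pplus (g - t)) \<circ> taub)"
    by (rule indep_var_compose[OF indep]) auto
  then have "indep_var borel tau borel (\<lambda>x. pplus (g - taub x))"
    by (simp add: comp_def)
  from indep_var_lebesgue_integral[OF this integrable_tau integrable_wait]
       indep_var_integrable[OF this integrable_tau integrable_wait]
  show "(\<integral>x. tau x * pplus (g - taub x) \<partial>M) = mean * Ewait g"
    and "integrable M (\<lambda>x. tau x * pplus (g - taub x))" .
qed

lemma EL_eq: "EL M tau taub g = Ewait g + mean"
  by (simp add: EL_def)

lemma EQ_eq: "EQ M tau taub g = Ewait_prod g + mean\<^sup>2 + (Ewait_sq g + 2 * mean * Ewait g + mom2) / 2"
proof -
  have "(pplus (g - taub x) + tau x)\<^sup>2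
          = (pplus (g - taub x))\<^sup>2 + 2 * (tau x * pplus (g - taub x)) + (tau x)\<^sup>2" for x
    by (simp add: power2_eq_square algebra_simps)
  then have "(\<integral>x. (pplus (g - taub x) + tau x)\<^sup>2 \<partial>M) = Ewait_sq g + 2 * (mean * Ewait g) + mom2"
    using integrable_wait_sq[of g] integrable_tau_wait[of g] square_integrable_tau
    by (simp add: integral_tau_wait)
  then show ?thesis by (simp add: EQ_def)
qed

lemma mean_pos: "mean > 0"
proof -
  have "mean \<ge> 0"
    using tau_nonneg by (intro integral_nonneg_AE) auto
  moreover have "mean \<noteq> 0"
  proof
    assume "mean = 0"
    then have "AE x in M. tau x = 0"
      using tau_nonneg integrable_tau by (subst (asm) integral_nonneg_eq_0_iff_AE) auto
    then have "mom2 = 0"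
      by (subst integral_cong_AE[where g="\<lambda>x. 0"]) auto
    then show False using second_moment_pos by simp
  qed
  ultimately show ?thesis by simp
qed

lemma Ewait_nonneg: "Ewait g \<ge> 0"
  by (intro integral_nonneg_AE) (simp add: pplus_nonneg)

lemma Ewait_sq_nonneg: "Ewait_sq g \<ge> 0"
  by (intro integral_nonneg_AE) simp

lemma Ewait_prod_nonneg: "Ewait_prod g \<ge> 0"
  using taub_nonneg by (intro integral_nonneg_AE) (auto elim!: eventually_mono simp: pplus_nonneg)

lemma EL_pos: "EL M tau taub g > 0"
  using Ewait_nonneg[of g] mean_pos by (simp add: EL_eq)

lemma EQ_minus_mean_EL:
  "EQ M tau taub g - mean * EL M tau taub g = Ewait_prod g + (1/2) * Ewait_sq g + (1/2) * mom2"
  by (simp add: EQ_eq EL_eq power2_eq_square algebra_simps)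

lemma EQ_minus_mean_EL_pos: "Ewait_prod g + (1/2) * Ewait_sq g + (1/2) * mom2 > 0"
  using Ewait_prod_nonneg[of g] Ewait_sq_nonneg[of g] second_moment_pos by linarith

subsection \<open>The minimum of the Lagrangian\<close>

definition q_bound :: "real \<Rightarrow> real" where
  "q_bound c = mom2 / 2 - c * mean - Ewait_sq c / 2"

lemma lagrangian_eq:
  "EQ M tau taub g - (mean + c) * EL M tau taub g
     = (\<integral>x. wait_area g (taub x) - c * pplus (g - taub x) \<partial>M) + mom2 / 2 - c * mean"
  using integrable_wait_area[of g] integrable_wait[of g]
  by (simp add: integral_wait_area EQ_eq EL_eq power2_eq_square algebra_simps)

lemma lagrangian_ge_q_bound: "EQ M tau taub g - (mean + c) * EL M tau taub g \<ge> q_bound c"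
proof -
  have "(\<integral>x. -((pplus (c - taub x))\<^sup>2 / 2) \<partial>M)
          \<le> (\<integral>x. wait_area g (taub x) - c * pplus (g - taub x) \<partial>M)"
    using integrable_wait_area[of g] integrable_wait[of g] integrable_wait_sq[of c]
    by (intro integral_mono wait_area_minus_linear_ge) auto
  then show ?thesis
    unfolding lagrangian_eq q_bound_def by simp
qed

lemma lagrangian_diag: "EQ M tau taub c - (mean + c) * EL M tau taub c = q_bound c"
  unfolding lagrangian_eq q_bound_def wait_area_minus_linear_diag by simp

lemma qfun_ge_q_bound: "qfun M tau taub eta \<ge> q_bound (eta - mean)"
  unfolding qfun_def
  using lagrangian_ge_q_bound[where c="eta - mean"] by (intro cINF_greatest) auto

lemma qfun_eq_q_bound:
  assumes "eta \<ge> mean"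
  shows "qfun M tau taub eta = q_bound (eta - mean)"
proof -
  have "bdd_below ((\<lambda>g. EQ M tau taub g - eta * EL M tau taub g) ` {0..})"
    using lagrangian_ge_q_bound[where c="eta - mean"] by (intro bdd_belowI) auto
  then have "qfun M tau taub eta \<le> q_bound (eta - mean)"
    unfolding qfun_def using assms lagrangian_diag[of "eta - mean"]
    by (intro cINF_lower2[where x="eta - mean"]) auto
  with qfun_ge_q_bound show ?thesis by (simp add: order_antisym)
qed

lemma Ewait_sq_zero: "Ewait_sq 0 = 0"
proof -
  have "AE x in M. (pplus (0 - taub x))\<^sup>2 = 0"
    using taub_nonneg by eventually_elim (auto simp: pplus_def)
  then show ?thesis by (rule integral_eq_zero_AE)
qed

lemma q_bound_zero: "q_bound 0 = mom2 / 2"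
  unfolding q_bound_def Ewait_sq_zero by simp

lemma q_bound_strict_antimono:
  assumes "c < d"
  shows "q_bound d < q_bound c"
proof -
  have "Ewait_sq c \<le> Ewait_sq d"
    using integrable_wait_sq[of c] integrable_wait_sq[of d] assms
    by (intro integral_mono power_mono) (auto simp: pplus_def)
  moreover have "c * mean < d * mean"
    using assms mean_pos by simp
  ultimately show ?thesis by (simp add: q_bound_def)
qed

lemma has_real_derivative_Ewait_sq: "((\<lambda>c. Ewait_sq c / 2) has_real_derivative Ewait c) (at c)"
proof (rule has_real_derivative_by_remainder[where G="\<lambda>y. \<bar>y - c\<bar>"])
  fix y
  have "\<bar>Ewait_sq y / 2 - Ewait_sq c / 2 - (y - c) * Ewait c\<bar>
          = \<bar>\<integral>x. (pplus (c - taub x + (y - c)))\<^sup>2 / 2 - (pplus (c - taub x))\<^sup>2 / 2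
                  - (y - c) * pplus (c - taub x) \<partial>M\<bar>"
    using integrable_wait_sq[of y] integrable_wait_sq[of c] integrable_wait[of c] by simp
  also have "\<dots> \<le> (\<integral>x. (y - c)\<^sup>2 / 2 \<partial>M)"
    using integrable_wait_sq[of y] integrable_wait_sq[of c] integrable_wait[of c]
    by (intro order_trans[OF integral_abs_bound] integral_mono pplus_square_remainder) auto
  also have "\<dots> \<le> \<bar>y - c\<bar> * \<bar>y - c\<bar>"
    by (simp add: prob_space power2_eq_square abs_mult_self)
  finally show "\<bar>Ewait_sq y / 2 - Ewait_sq c / 2 - (y - c) * Ewait c\<bar> \<le> \<bar>y - c\<bar> * \<bar>y - c\<bar>" .
qed (auto intro!: tendsto_eq_intros)

lemma continuous_on_q_bound: "continuous_on A q_bound"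
proof (intro continuous_at_imp_continuous_on ballI)
  fix c
  have "isCont (\<lambda>c. Ewait_sq c / 2) c"
    by (rule DERIV_isCont[OF has_real_derivative_Ewait_sq])
  then show "isCont q_bound c"
    unfolding q_bound_def[abs_def] by (rule isCont_diff[rotated]) (intro continuous_intros)
qed

lemma q_bound_root: "\<exists>!c. q_bound c = 0"
proof -
  define K where "K = mom2 / mean"
  have "K * mean = mom2" "0 \<le> K"
    using mean_pos second_moment_pos by (auto simp: K_def)
  then have "q_bound K = - mom2 / 2 - Ewait_sq K / 2"
    by (simp add: q_bound_def)
  then have "q_bound K \<le> 0"
    using Ewait_sq_nonneg[of K] second_moment_pos by linarith
  moreover have "0 \<le> q_bound 0"
    using second_moment_pos by (simp add: q_bound_zero)
  ultimately obtain c where "q_bound c = 0"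
    using IVT2'[of q_bound K 0 0] \<open>0 \<le> K\<close> continuous_on_q_bound by auto
  moreover have "d = c" if "q_bound d = 0" for d
    using q_bound_strict_antimono[of c d] q_bound_strict_antimono[of d c] that \<open>q_bound c = 0\<close>
    by (cases d c rule: linorder_cases) auto
  ultimately show ?thesis by blast
qed

lemma q_bound_pos: "c \<le> 0 \<Longrightarrow> q_bound c > 0"
  using q_bound_strict_antimono[of c 0] second_moment_pos
  by (cases "c = 0") (auto simp: q_bound_zero)

lemma q_bound_root_pos: "q_bound c = 0 \<Longrightarrow> c > 0"
  using q_bound_pos[of c] by fastforce

lemma qfun_eq_0_iff: "qfun M tau taub eta = 0 \<longleftrightarrow> eta > mean \<and> q_bound (eta - mean) = 0"
  using qfun_ge_q_bound[of eta] qfun_eq_q_bound[of eta] q_bound_pos[of "eta - mean"]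
  by (cases "eta > mean") auto

lemma ratio_minimal:
  assumes "q_bound c = 0"
  shows "EQ M tau taub c / EL M tau taub c \<le> EQ M tau taub g / EL M tau taub g"
proof -
  have "EQ M tau taub c / EL M tau taub c = mean + c"
    using lagrangian_diag[of c] assms EL_pos[of c] by (simp add: field_simps)
  also have "\<dots> \<le> EQ M tau taub g / EL M tau taub g"
    using lagrangian_ge_q_bound[where g=g and c=c] assms EL_pos[of g] by (simp add: field_simps)
  finally show ?thesis .
qed

subsection \<open>Derivatives\<close>

lemma has_real_derivative_Ewait:
  assumes "isCont (\<lambda>s. measure M {x\<in>space M. tau x \<le> s}) g"
  shows "((\<lambda>y. Ewait y) has_real_derivative measure M {x\<in>space M. tau x \<le> g}) (at g)"
proof -
  have "\<bar>pplus (g + h - t) - pplus (g - t) - h * indicator {..g} t\<bar>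
          \<le> 1 * \<bar>h\<bar> * (\<bar>h\<bar> + indicator {g - \<bar>h\<bar><..g + \<bar>h\<bar>} t)" for h t
    using pplus_kink_bound[of g h t] by (rule order_trans) (simp add: mult_left_mono)
  then have "((\<lambda>y. \<integral>x. pplus (y - taub x) \<partial>M) has_real_derivative (\<integral>x. indicator {..g} (taub x) \<partial>M)) (at g)"
    using assms integrable_wait integrable_indicator_comp[of taub borel "{..g}"]
    by (intro has_real_derivative_integral_kink[where C=1]) (auto simp: cdf_taub)
  then show ?thesis
    by (simp add: integral_indicator_comp cdf_taub)
qed

lemma has_real_derivative_integral_wait_area:
  assumes "isCont (\<lambda>s. measure M {x\<in>space M. tau x \<le> s}) g"
  shows "((\<lambda>y. \<integral>x. wait_area y (taub x) \<partial>M)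
           has_real_derivative g * measure M {x\<in>space M. tau x \<le> g}) (at g)"
proof -
  have "((\<lambda>y. \<integral>x. wait_area y (taub x) \<partial>M)
           has_real_derivative (\<integral>x. g * indicator {..g} (taub x) \<partial>M)) (at g)"
    using assms integrable_wait_area integrable_indicator_comp[of taub borel "{..g}"]
    by (intro has_real_derivative_integral_kink[where C="\<bar>g\<bar> + 2"] wait_area_kink_bound)
      (auto simp: cdf_taub)
  then show ?thesis
    by (simp add: integral_indicator_comp cdf_taub)
qed

lemma has_real_derivative_EL:
  assumes "isCont (\<lambda>s. measure M {x\<in>space M. tau x \<le> s}) g"
  shows "(EL M tau taub has_real_derivative measure M {x\<in>space M. tau x \<le> g}) (at g)"
  unfolding EL_def using has_real_derivative_Ewait[OF assms]
  by (auto intro!: derivative_eq_intros)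

lemma has_real_derivative_EQ:
  assumes "isCont (\<lambda>s. measure M {x\<in>space M. tau x \<le> s}) g"
  shows "(EQ M tau taub has_real_derivative (g + mean) * measure M {x\<in>space M. tau x \<le> g}) (at g)"
proof -
  have "EQ M tau taub = (\<lambda>y. (\<integral>x. wait_area y (taub x) \<partial>M) + mean * Ewait y + (mean\<^sup>2 + mom2 / 2))"
    by (rule ext) (simp add: EQ_eq integral_wait_area algebra_simps)
  then show ?thesis
    using has_real_derivative_integral_wait_area[OF assms] has_real_derivative_Ewait[OF assms]
    by (auto intro!: derivative_eq_intros simp: algebra_simps)
qed

end

theorem mainTheorem3:
  fixes M :: "'a measure" and tau taub :: "'a \<Rightarrow> real"
  assumes "prob_space M"
    and "tau \<in> borel_measurable M" and "taub \<in> borel_measurable M"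
    and "prob_space.indep_var M borel tau borel taub"
    and "distr M borel tau = distr M borel taub"
    and "AE x in M. tau x \<ge> 0" and "AE x in M. taub x \<ge> 0"
    and "integrable M (\<lambda>x. (tau x)^2)"
    and "(\<integral>x. (tau x)^2 \<partial>M) > 0"
  shows
    "(\<forall>g::real. g \<ge> 0 \<longrightarrow>
        isCont (\<lambda>s. measure M {x \<in> space M. tau x \<le> s}) g \<longrightarrow>
          ((EQ M tau taub) has_real_derivative
              ((g + (\<integral>x. tau x \<partial>M)) * measure M {x \<in> space M. tau x \<le> g})) (at g within {0..})
        \<and> ((EL M tau taub) has_real_derivative
              (measure M {x \<in> space M. tau x \<le> g})) (at g within {0..}))
   \<and> (\<forall>g::real. g \<ge> 0 \<longrightarrow>
        EQ M tau taub g - (\<integral>x. tau x \<partial>M) * EL M tau taub g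
          = (\<integral>x. taub x * pplus (g - taub x) \<partial>M) + (1/2) * (\<integral>x. (pplus (g - taub x))^2 \<partial>M)
            + (1/2) * (\<integral>x. (tau x)^2 \<partial>M)
        \<and> (\<integral>x. taub x * pplus (g - taub x) \<partial>M) + (1/2) * (\<integral>x. (pplus (g - taub x))^2 \<partial>M)
            + (1/2) * (\<integral>x. (tau x)^2 \<partial>M) > 0)
   \<and> qfun M tau taub (\<integral>x. tau x \<partial>M) > 0
   \<and> (\<exists>!eta. eta \<ge> 0 \<and> qfun M tau taub eta = 0)
   \<and> (\<forall>eta. eta \<ge> 0 \<and> qfun M tau taub eta = 0 \<longrightarrow>
        eta > (\<integral>x. tau x \<partial>M)
        \<and> eta - (\<integral>x. tau x \<partial>M) > 0
        \<and> (\<forall>g::real. g \<ge> 0 \<longrightarrow>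
             EQ M tau taub (eta - (\<integral>x. tau x \<partial>M)) / EL M tau taub (eta - (\<integral>x. tau x \<partial>M))
               \<le> EQ M tau taub g / EL M tau taub g))"
proof -
  interpret iid_service_times M tau taub
    using assms by (auto simp: iid_service_times_def iid_service_times_axioms_def)
  obtain c where c: "q_bound c = 0" and c_unique: "\<And>d. q_bound d = 0 \<Longrightarrow> d = c"
    using q_bound_root by blast
  have "\<exists>!eta. eta \<ge> 0 \<and> qfun M tau taub eta = 0"
  proof (rule ex1I[of _ "mean + c"])
    show "mean + c \<ge> 0 \<and> qfun M tau taub (mean + c) = 0"
      using c q_bound_root_pos[OF c] mean_pos by (simp add: qfun_eq_0_iff)
  qed (auto simp: qfun_eq_0_iff dest: c_unique)
  moreover have "qfun M tau taub mean > 0"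
    using qfun_eq_q_bound[of mean] q_bound_zero second_moment_pos by simp
  ultimately show ?thesis
    using has_real_derivative_EQ has_real_derivative_EL EQ_minus_mean_EL EQ_minus_mean_EL_pos
    by (auto simp: qfun_eq_0_iff intro: has_field_derivative_at_within ratio_minimal)
qed

end
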